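(* Let $\{\Delta_1,\dots,\Delta_r\}$ be a nef-partition of a reflexive polytope $\Delta$ with dual nef-partition $\{\nabla_1,\dots,\nabla_r\}$, let $i\in J\subset I=\{1,\dots,r\}$. Then a nonzero lattice point $w\in M$ lies in the relative interior of $\Delta_i+\sum_{j\in J}\Delta_j$ (where $\Delta_i$ appears twice) if and only if $w\in\Delta_i^0$ and $0$ lies in the relative interior of $\sum_{j\notin J}\nabla_j(w)$ (an empty sum being $\{0\}$). Moreover, in this case $$\dim\Big(\Delta_i+\sum_{j\in J}\Delta_j\Big)+\dim\Big(\sum_{j\notin J}\nabla_j(w)\Big)=d.$$
   Context: Let $M\cong\mathbb Z^d$, $N=\mathrm{Hom}(M,\mathbb Z)$, $\langle\cdot,\cdot\rangle$ the pairing. A $d$-dimensional lattice polytope $\Delta\subset M_{\mathbb R}$ is reflexive if $\Delta=\{x:\langle x,e_k\rangle\ge-1,\ k=1,\dots,n\}$ with $e_k\in N$ the primitive inward facet normals. A nef-partition is a Minkowski decomposition $\Delta=\Delta_1+\dots+\Delta_r$ into lattice polytopes with $\varphi_j(e_k)\in\{0,1\}$ for all $j,k$, $\varphi_j(y)=-\min_{x\in\Delta_j}\langle x,y\rangle$; the dual nef-partition consists of $\nabla_j=\mathrm{Conv}(\{0\}\cup\{e_k:\varphi_j(e_k)=1\})\subset N_{\mathbb R}$, and $\nabla^*=\mathrm{Conv}(\Delta_1\cup\dots\cup\Delta_r)$ is a reflexive polytope. Put $\mathcal V(\nabla^* )=\partial\nabla^*\cap M$ and $\Delta_i^0=\Delta_i\cap\mathcal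 V(\nabla^* )$. For $w\in M$, $\nabla_j(w)$ denotes the face of $\nabla_j$ on which $\langle w,\cdot\rangle$ attains its minimum. *)

theory Defs
  imports "HOL-Analysis.Analysis"
begin

(* M and N are both modelled as the integer points of real^'d; the pairing <x,y> is the
   standard inner product x \<bullet> y.  Minkowski sums use the set-sum instance of
   HOL-Library.Set_Algebras (imported by Analysis); an empty sum is {0}. *)

definition lattice_pt :: "real^'d \<Rightarrow> bool" where
  "lattice_pt x \<longleftrightarrow> (\<forall>i. x $ i \<in> \<int>)"

definition primitive_pt :: "real^'d \<Rightarrow> bool" where
  "primitive_pt v \<longleftrightarrow> lattice_pt v \<and> v \<noteq> 0 \<and>
     (\<forall>k::int. k > 1 \<longrightarrow> \<not> lattice_pt ((1 / real_of_int k) *\<^sub>R v))"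

definition lattice_polytope :: "(real^'d) set \<Rightarrow> bool" where
  "lattice_polytope P \<longleftrightarrow>
     (\<exists>S. finite S \<and> S \<noteq> {} \<and> (\<forall>x\<in>S. lattice_pt x) \<and> P = convex hull S)"

definition facet_normals :: "(real^'d) set \<Rightarrow> (real^'d) set" where
  "facet_normals P = {e. primitive_pt e \<and>
     (\<exists>F. F facet_of P \<and> (\<forall>x\<in>F. \<forall>y\<in>P. x \<bullet> e \<le> y \<bullet> e))}"

definition reflexive_polytope :: "(real^'d) set \<Rightarrow> bool" where
  "reflexive_polytope P \<longleftrightarrow> lattice_polytope P \<and> aff_dim P = int CARD('d) \<and>
     P = {x. \<forall>e\<in>facet_normals P. x \<bullet> e \<ge> -1}"

definition supp_phi :: "(real^'d) set \<Rightarrow> real^'d \<Rightarrow> real" where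
  "supp_phi P y = - (INF x\<in>P. x \<bullet> y)"

definition nef_partition :: "(real^'d) set \<Rightarrow> (nat \<Rightarrow> (real^'d) set) \<Rightarrow> nat \<Rightarrow> bool" where
  "nef_partition P Ds r \<longleftrightarrow>
     (\<forall>j\<in>{1..r}. lattice_polytope (Ds j)) \<and>
     P = (\<Sum>j\<in>{1..r}. Ds j) \<and>
     (\<forall>j\<in>{1..r}. \<forall>e\<in>facet_normals P. supp_phi (Ds j) e \<in> {0, 1})"

definition nabla :: "(real^'d) set \<Rightarrow> (nat \<Rightarrow> (real^'d) set) \<Rightarrow> nat \<Rightarrow> (real^'d) set" where
  "nabla P Ds j = convex hull ({0} \<union> {e\<in>facet_normals P. supp_phi (Ds j) e = 1})"

definition nabla_face :: "(real^'d) set \<Rightarrow> (nat \<Rightarrow> (real^'d) set) \<Rightarrow> nat \<Rightarrow> real^'d \<Rightarrow> (real^'d) set" where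
  "nabla_face P Ds j w = {y\<in>nabla P Ds j. \<forall>z\<in>nabla P Ds j. w \<bullet> y \<le> w \<bullet> z}"

definition nabla_star :: "(nat \<Rightarrow> (real^'d) set) \<Rightarrow> nat \<Rightarrow> (real^'d) set" where
  "nabla_star Ds r = convex hull (\<Union>j\<in>{1..r}. Ds j)"

definition Delta0 :: "(nat \<Rightarrow> (real^'d) set) \<Rightarrow> nat \<Rightarrow> nat \<Rightarrow> (real^'d) set" where
  "Delta0 Ds r i = Ds i \<inter> {x. x \<in> frontier (nabla_star Ds r) \<and> lattice_pt x}"

end

theory Submission
  imports Defs
begin

text \<open>Every facet normal \<open>e\<close> of \<open>P\<close> is a vertex of exactly one \<open>\<nabla>\<^sub>k\<close>, and
  \<open>Q = \<Delta>\<^sub>i + \<Sum>\<^sub>j\<^sub>\<in>\<^sub>J \<Delta>\<^sub>j\<close>, being a Minkowski summand of \<open>2P\<close>, is cut out by the inequalities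
  \<open>\<langle>x,e\<rangle> \<ge> -\<phi>\<^sub>i(e) - \<Sum>\<^sub>j\<^sub>\<in>\<^sub>J \<phi>\<^sub>j(e)\<close>.  A lattice point in the relative interior of \<open>Q\<close> has
  lattice distance at least one from every facet of \<open>Q\<close> missing \<open>0\<close>, which forces it into \<open>\<Delta>\<^sub>i\<close>,
  and a nonzero lattice point of \<open>\<Delta>\<^sub>i\<close> pairs to \<open>-1\<close> with some \<open>e\<close>, so it lies on the boundary of
  \<open>\<nabla>\<^sup>*\<close>.  For \<open>w \<in> \<Delta>\<^sub>i\<close> the facets of \<open>Q\<close> through \<open>w\<close> have the normals \<open>S\<close> lying in some
  \<open>\<nabla>\<^sub>k\<close>, \<open>k \<notin> J\<close>, and vanishing at \<open>w\<close>.  By Farkas' lemma \<open>w\<close> is relatively interior iff the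
  cone spanned by \<open>S\<close> is a linear subspace; and \<open>\<Sum>\<^sub>j\<^sub>\<notin>\<^sub>J \<nabla>\<^sub>j(w)\<close>, squeezed between \<open>S\<close> and this
  cone, has \<open>0\<close> in its relative interior under the same condition.  Finally
  \<open>span Q = S\<^sup>\<bottom>\<close> and \<open>span (\<Sum>\<^sub>j\<^sub>\<notin>\<^sub>J \<nabla>\<^sub>j(w)) = span S\<close> give the dimension formula.\<close>

lemma mem_set_sum_iff:
  assumes "finite I"
  shows "x \<in> (\<Sum>i\<in>I. S i) \<longleftrightarrow> (\<exists>s. (\<forall>i\<in>I. s i \<in> S i) \<and> x = (\<Sum>i\<in>I. s i))"
  using set_sum_alt[OF assms, of S] by auto

lemma zero_in_set_sum:
  fixes S :: "'i \<Rightarrow> 'a::comm_monoid_add set"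
  assumes "\<And>i. i \<in> I \<Longrightarrow> 0 \<in> S i"
  shows "0 \<in> (\<Sum>i\<in>I. S i)"
  using assms
proof (induction I rule: infinite_finite_induct)
  case (insert k I)
  then have "0 + 0 \<in> S k + (\<Sum>i\<in>I. S i)" by (intro set_plus_intro) auto
  with insert.hyps show ?case by simp
qed auto

lemma summand_subset_set_sum:
  fixes S :: "'i \<Rightarrow> 'a::comm_monoid_add set"
  assumes "finite I" "\<And>i. i \<in> I \<Longrightarrow> 0 \<in> S i" "k \<in> I"
  shows "S k \<subseteq> (\<Sum>i\<in>I. S i)"
proof -
  have "0 \<in> (\<Sum>i\<in>I - {k}. S i)" using assms(2) by (intro zero_in_set_sum) auto
  then have "S k \<subseteq> (\<Sum>i\<in>I - {k}. S i) + S k" by (rule set_zero_plus2)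
  then show ?thesis using sum.remove[OF assms(1,3), of S] by (simp add: add.commute)
qed

lemma compact_set_plus:
  fixes A B :: "'a::real_normed_vector set"
  assumes "compact A" "compact B"
  shows "compact (A + B)"
proof -
  have "A + B = {x + y | x y. x \<in> A \<and> y \<in> B}" by (auto simp: set_plus_def)
  then show ?thesis using compact_sums[OF assms] by simp
qed

lemma compact_set_sum:
  fixes S :: "'i \<Rightarrow> 'a::real_normed_vector set"
  assumes "\<And>i. i \<in> I \<Longrightarrow> compact (S i)"
  shows "compact (\<Sum>i\<in>I. S i)"
  using assms by (induction I rule: infinite_finite_induct) (auto intro: compact_set_plus)

lemma convex_cone_sum:
  assumes "convex_cone C" "\<And>g. g \<in> G \<Longrightarrow> f g \<in> C"
  shows "sum f G \<in> C"
  using assms(2)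
  by (induction G rule: infinite_finite_induct)
    (auto intro: convex_cone_add[OF assms(1)] convex_cone_contains_0[OF assms(1)])

section \<open>Polyhedra given by finitely many linear inequalities\<close>

lemma inequalities_feasible_step:
  fixes w z :: "'a::real_inner"
  assumes "finite E" "\<forall>e\<in>E. c e \<le> w \<bullet> e" "\<forall>e\<in>E. w \<bullet> e = c e \<longrightarrow> 0 \<le> z \<bullet> e"
  shows "\<exists>t>0. \<forall>e\<in>E. c e \<le> (w + t *\<^sub>R z) \<bullet> e"
proof -
  have "eventually (\<lambda>t. c e \<le> (w + t *\<^sub>R z) \<bullet> e) (at_right 0)" if e: "e \<in> E" for e
  proof (cases "w \<bullet> e = c e")
    case True
    with assms(3) e have "0 \<le> z \<bullet> e" by auto
    with True show ?thesis
      using eventually_at_right_less[of "0::real"] by (auto simp: inner_add_left elim!: eventually_mono)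
  next
    case False
    with assms(2) e have "c e < w \<bullet> e" by force
    moreover have "((\<lambda>t. (w + t *\<^sub>R z) \<bullet> e) \<longlongrightarrow> (w + 0 *\<^sub>R z) \<bullet> e) (at_right 0)"
      by (intro tendsto_intros)
    ultimately show ?thesis by (auto dest: order_tendstoD(1) elim!: eventually_mono)
  qed
  then have "eventually (\<lambda>t. \<forall>e\<in>E. c e \<le> (w + t *\<^sub>R z) \<bullet> e) (at_right 0)"
    by (intro eventually_ball_finite[OF assms(1)]) auto
  then have "eventually (\<lambda>t. 0 < t \<and> (\<forall>e\<in>E. c e \<le> (w + t *\<^sub>R z) \<bullet> e)) (at_right (0::real))"
    using eventually_conj[OF eventually_at_right_less[of "0::real"]] by blast
  from eventually_happens'[OF _ this] show ?thesis by auto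
qed

lemma inner_nonneg_on_convex_cone_hull:
  fixes v :: "'a::real_inner"
  assumes "y \<in> convex_cone hull S" "\<forall>e\<in>S. 0 \<le> v \<bullet> e"
  shows "0 \<le> v \<bullet> y"
proof -
  have "convex_cone hull S \<subseteq> {y. 0 \<le> v \<bullet> y}"
    using assms(2) convex_cone_halfspace_ge[of v] by (intro hull_minimal) auto
  then show ?thesis using assms(1) by auto
qed

lemma Farkas_separation:
  fixes y :: "'a::euclidean_space"
  assumes "finite S" "y \<notin> convex_cone hull S"
  obtains a where "a \<bullet> y < 0" "\<forall>e\<in>S. 0 \<le> a \<bullet> e"
proof -
  let ?C = "convex_cone hull S"
  have "closed ?C" using assms(1) by (rule closed_convex_cone_hull)
  moreover have "convex ?C" by (rule convex_convex_cone_hull)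
  ultimately obtain a b where ab: "a \<bullet> y < b" "\<forall>x\<in>?C. b < a \<bullet> x"
    using separating_hyperplane_closed_point assms(2) by blast
  have "b < 0" using ab(2) convex_cone_hull_contains_0 by fastforce
  have "0 \<le> a \<bullet> x" if "x \<in> ?C" for x
  proof (rule ccontr)
    assume "\<not> 0 \<le> a \<bullet> x"
    then have neg: "a \<bullet> x < 0" by simp
    define t where "t = 2 * b / (a \<bullet> x)"
    have "t \<ge> 0" using neg \<open>b < 0\<close> by (simp add: t_def divide_nonpos_neg)
    then have "t *\<^sub>R x \<in> ?C" using convex_cone_hull_mul that by blast
    moreover have "a \<bullet> (t *\<^sub>R x) = 2 * b" using neg by (simp add: t_def)
    ultimately show False using ab(2) \<open>b < 0\<close> by fastforce
  qed
  then have "\<forall>e\<in>S. 0 \<le> a \<bullet> e" using hull_inc[of _ S convex_cone] by blast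
  with ab(1) \<open>b < 0\<close> show ?thesis by (intro that[of a]) auto
qed

lemma minimised_functional_in_active_cone:
  fixes y p :: "'a::euclidean_space"
  assumes "finite E" "\<forall>e\<in>E. c e \<le> p \<bullet> e"
    and "\<And>q. \<forall>e\<in>E. c e \<le> q \<bullet> e \<Longrightarrow> p \<bullet> y \<le> q \<bullet> y"
  shows "y \<in> convex_cone hull {e\<in>E. p \<bullet> e = c e}"
proof (rule ccontr)
  assume y: "y \<notin> convex_cone hull {e\<in>E. p \<bullet> e = c e}"
  have "finite {e\<in>E. p \<bullet> e = c e}" using assms(1) by simp
  then obtain a where a: "a \<bullet> y < 0" "\<forall>e\<in>{e\<in>E. p \<bullet> e = c e}. 0 \<le> a \<bullet> e"
    using y by (rule Farkas_separation)
  then obtain t where "t > 0" "\<forall>e\<in>E. c e \<le> (p + t *\<^sub>R a) \<bullet> e"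
    using inequalities_feasible_step[OF assms(1,2), of a] by auto
  then have "p \<bullet> y \<le> (p + t *\<^sub>R a) \<bullet> y" using assms(3) by blast
  then have "0 \<le> t * (a \<bullet> y)" by (simp add: inner_add_left)
  with \<open>t > 0\<close> a(1) show False using mult_pos_neg[of t "a \<bullet> y"] by linarith
qed

text \<open>If \<open>x \<notin> A\<close>, separate it from \<open>A\<close> by \<open>a\<close> and minimise \<open>a\<close> over \<open>A + B\<close> at \<open>p\<^sub>1 + p\<^sub>2\<close>:
  then \<open>a\<close> is a nonnegative combination of active normals, each of which is at least as large at
  \<open>x\<close> as at \<open>p\<^sub>1\<close>.\<close>

lemma mem_Minkowski_summand_of_polyhedron:
  fixes A B :: "'a::euclidean_space set"
  assumes "finite E" "convex A" "closed A" "compact (A + B)" "A + B \<noteq> {}"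
    and AB: "A + B = {x. \<forall>e\<in>E. c e \<le> x \<bullet> e}"
    and x: "\<forall>e\<in>E. \<exists>q\<in>A. q \<bullet> e \<le> x \<bullet> e"
  shows "x \<in> A"
proof (rule ccontr)
  assume "x \<notin> A"
  then obtain a b where ab: "a \<bullet> x < b" "\<forall>y\<in>A. b < a \<bullet> y"
    using separating_hyperplane_closed_point assms(2,3) by blast
  have "continuous_on (A + B) (\<lambda>q. q \<bullet> a)" by (intro continuous_intros)
  then obtain p where p: "p \<in> A + B" "\<forall>q\<in>A + B. p \<bullet> a \<le> q \<bullet> a"
    using continuous_attains_inf[OF assms(4,5)] by blast
  then obtain p1 p2 where pp: "p = p1 + p2" "p1 \<in> A" "p2 \<in> B"
    by (auto elim: set_plus_elim)
  have "a \<in> convex_cone hull {e\<in>E. p \<bullet> e = c e}"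
    using p AB by (intro minimised_functional_in_active_cone[OF assms(1)]) (auto simp: inner_commute)
  moreover have "0 \<le> (x - p1) \<bullet> e" if e: "e \<in> E" "p \<bullet> e = c e" for e
  proof -
    obtain q where q: "q \<in> A" "q \<bullet> e \<le> x \<bullet> e" using x e by auto
    have "q + p2 \<in> A + B" using q(1) pp(3) by blast
    with AB e have "p1 \<bullet> e \<le> q \<bullet> e" by (auto simp: pp(1) inner_add_left)
    with q(2) show ?thesis by (simp add: inner_diff_left)
  qed
  ultimately have "0 \<le> (x - p1) \<bullet> a"
    using inner_nonneg_on_convex_cone_hull[of a "{e\<in>E. p \<bullet> e = c e}" "x - p1"] by blast
  then have "a \<bullet> p1 \<le> a \<bullet> x" using inner_diff_right[of a x p1] inner_commute[of "x - p1" a] by linarith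
  moreover have "b < a \<bullet> p1" using ab(2) pp(2) by blast
  ultimately show False using ab(1) by simp
qed

section \<open>Relative interiors and convex cones\<close>

lemma rel_interior_inner_gt:
  fixes Q :: "'a::euclidean_space set"
  assumes w: "w \<in> rel_interior Q" and "z \<in> Q" "\<forall>q\<in>Q. c \<le> q \<bullet> e" "c < z \<bullet> e"
  shows "c < w \<bullet> e"
proof (rule ccontr)
  assume "\<not> c < w \<bullet> e"
  moreover have "w \<in> Q" using w rel_interior_subset by blast
  ultimately have wc: "w \<bullet> e = c" using assms(3) by force
  obtain T where T: "open T" "w \<in> T" "T \<inter> affine hull Q \<subseteq> Q"
    using w mem_rel_interior by blast
  have "((\<lambda>t. w + t *\<^sub>R (w - z)) \<longlongrightarrow> w + 0 *\<^sub>R (w - z)) (at_right (0::real))"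
    by (intro tendsto_intros)
  then have "eventually (\<lambda>t. w + t *\<^sub>R (w - z) \<in> T) (at_right (0::real))"
    using T(1,2) by (intro topological_tendstoD) auto
  then have "eventually (\<lambda>t. 0 < t \<and> w + t *\<^sub>R (w - z) \<in> T) (at_right (0::real))"
    using eventually_at_right_less[of "0::real"] by (intro eventually_conj)
  then obtain t :: real where t: "0 < t" "w + t *\<^sub>R (w - z) \<in> T"
    using eventually_happens'[of "at_right (0::real)"] by auto
  have "w + t *\<^sub>R (w - z) = (1 + t) *\<^sub>R w + (-t) *\<^sub>R z" by (simp add: algebra_simps)
  also have "\<dots> \<in> affine hull Q"
    using \<open>w \<in> Q\<close> \<open>z \<in> Q\<close> by (intro mem_affine affine_affine_hull) (auto intro: hull_inc)
  finally have "c \<le> (w + t *\<^sub>R (w - z)) \<bullet> e" using T(3) t(2) assms(3) by blast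
  also have "\<dots> = c + t * (c - z \<bullet> e)"
    using wc by (simp add: inner_add_left inner_diff_left)
  finally have "0 \<le> t * (c - z \<bullet> e)" by simp
  moreover have "t * (c - z \<bullet> e) < 0" using t(1) assms(4) by (simp add: mult_pos_neg)
  ultimately show False by simp
qed

lemma subspace_convex_cone_hull_iff:
  "subspace (convex_cone hull S) \<longleftrightarrow> (\<forall>s\<in>S. -s \<in> convex_cone hull S)"
proof
  assume "\<forall>s\<in>S. -s \<in> convex_cone hull S"
  then have "convex_cone hull S \<subseteq> uminus ` (convex_cone hull S)"
    by (intro hull_minimal convex_cone_negations convex_cone_convex_cone_hull) force
  then show "subspace (convex_cone hull S)"
    unfolding subspace_convex_cone_symmetric
    by (auto simp: convex_cone_convex_cone_hull)
qed (auto simp: subspace_neg hull_inc)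

lemma zero_in_rel_interior_if_subspace_cone:
  fixes A S :: "'a::euclidean_space set"
  assumes "convex A" "0 \<in> A" "S \<subseteq> A" "A \<subseteq> convex_cone hull S"
    and sub: "subspace (convex_cone hull S)"
  shows "0 \<in> rel_interior A"
proof -
  have "\<exists>e>1. (1 - e) *\<^sub>R x + e *\<^sub>R 0 \<in> A" if x: "x \<in> A" for x
  proof (cases "S = {}")
    case True
    with x assms(4) show ?thesis by (intro exI[of _ 2]) auto
  next
    case False
    have "-x \<in> conic hull (convex hull S)"
      using sub x assms(4) convex_cone_hull_separate_nonempty[OF False] subspace_neg by blast
    then obtain c v where cv: "-x = c *\<^sub>R v" "0 \<le> c" "v \<in> convex hull S"
      unfolding conic_hull_explicit by blast
    have "v \<in> A" using cv(3) hull_minimal[of S A convex] assms(1,3) by blast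
    define d where "d = 1 / (c + 1)"
    have d: "0 < d" "d * c \<le> 1" using cv(2) by (auto simp: d_def field_simps)
    have "(1 - d * c) *\<^sub>R 0 + (d * c) *\<^sub>R v \<in> A"
      using d cv(2) by (intro convexD[OF assms(1,2) \<open>v \<in> A\<close>]) auto
    moreover have "(1 - (1 + d)) *\<^sub>R x + (1 + d) *\<^sub>R 0 = (d * c) *\<^sub>R v"
      using arg_cong[OF cv(1), of "scaleR d"] by simp
    ultimately show ?thesis using d(1) by (intro exI[of _ "1 + d"]) auto
  qed
  then show "0 \<in> rel_interior A"
    using convex_rel_interior_iff[OF assms(1)] assms(2) by blast
qed

lemma neg_in_convex_cone_hull_if_zero_in_rel_interior:
  fixes A S :: "'a::euclidean_space set"
  assumes rel: "0 \<in> rel_interior A" and "S \<subseteq> A" "A \<subseteq> convex_cone hull S" "s \<in> S"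
  shows "-s \<in> convex_cone hull S"
proof -
  obtain e where e: "e > 0" "ball 0 e \<inter> affine hull A \<subseteq> A"
    using rel mem_rel_interior_ball by blast
  define t where "t = e / (2 * (norm s + 1))"
  have n: "0 < 2 * (norm s + 1)" "norm s < 2 * (norm s + 1)" by (smt (verit) norm_ge_zero)+
  then have t: "t > 0" "t * (2 * (norm s + 1)) = e" using e(1) by (auto simp: t_def)
  then have "t * norm s < e" using n(2) mult_strict_left_mono by metis
  have "affine hull A = span A"
    using rel rel_interior_subset by (intro affine_hull_span_0) (auto intro: hull_inc)
  moreover have "(-t) *\<^sub>R s \<in> span A" using assms(2,4) by (intro span_mul span_base) blast
  ultimately have "(-t) *\<^sub>R s \<in> A" using e(2) t(1) \<open>t * norm s < e\<close> by (auto simp: dist_norm)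
  then have "(-t) *\<^sub>R s \<in> convex_cone hull S" using assms(3) by blast
  from convex_cone_hull_mul[OF this, of "1/t"] t(1) show ?thesis by simp
qed

lemma zero_in_rel_interior_iff_subspace_cone:
  fixes A S :: "'a::euclidean_space set"
  assumes "convex A" "0 \<in> A" "S \<subseteq> A" "A \<subseteq> convex_cone hull S"
  shows "0 \<in> rel_interior A \<longleftrightarrow> subspace (convex_cone hull S)"
  using zero_in_rel_interior_if_subspace_cone[OF assms]
    neg_in_convex_cone_hull_if_zero_in_rel_interior[OF _ assms(3,4)]
  by (auto simp: subspace_convex_cone_hull_iff)

lemma convex_hull_inner_zero_in_cone:
  fixes v :: "'a::real_inner"
  assumes "finite G" "\<forall>g\<in>G. 0 \<le> v \<bullet> g" "y \<in> convex hull G" "v \<bullet> y = 0"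
  shows "y \<in> convex_cone hull {g\<in>G. v \<bullet> g = 0}"
proof -
  obtain u where u: "\<forall>g\<in>G. 0 \<le> u g" "(\<Sum>g\<in>G. u g *\<^sub>R g) = y"
    using assms(3) unfolding convex_hull_finite[OF assms(1)] by blast
  have "(\<Sum>g\<in>G. u g * (v \<bullet> g)) = v \<bullet> y"
    unfolding u(2)[symmetric] by (simp add: inner_sum_right)
  then have "\<forall>g\<in>G. u g * (v \<bullet> g) = 0"
    using assms(1,2,4) u(1) by (subst sum_nonneg_eq_0_iff[symmetric]) auto
  then have "u g *\<^sub>R g \<in> convex_cone hull {g\<in>G. v \<bullet> g = 0}" if "g \<in> G" for g
    using that u(1) by (cases "u g = 0")
      (auto simp: convex_cone_hull_contains_0 intro: convex_cone_hull_mul[OF hull_inc])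
  then show ?thesis
    unfolding u(2)[symmetric] by (intro convex_cone_sum convex_cone_convex_cone_hull)
qed

lemma orthogonal_comp_span: "(span S)\<^sup>\<bottom> = S\<^sup>\<bottom>"
proof
  show "S\<^sup>\<bottom> \<subseteq> (span S)\<^sup>\<bottom>"
  proof
    fix y assume "y \<in> S\<^sup>\<bottom>"
    then have "span S \<subseteq> {x. orthogonal y x}"
      by (intro span_minimal subspace_orthogonal_to_vector)
        (auto simp: orthogonal_comp_def orthogonal_commute)
    then show "y \<in> (span S)\<^sup>\<bottom>" by (auto simp: orthogonal_comp_def orthogonal_commute)
  qed
qed (auto simp: orthogonal_comp_def intro: span_base)

lemma subset_orthogonal_comp_iff: "A \<subseteq> S\<^sup>\<bottom> \<longleftrightarrow> (\<forall>a\<in>A. \<forall>s\<in>S. a \<bullet> s = 0)"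
proof -
  have "orthogonal s a \<longleftrightarrow> a \<bullet> s = 0" for a s :: 'a by (simp add: orthogonal_def inner_commute)
  then show ?thesis by (auto simp: orthogonal_comp_def)
qed

lemma dim_orthogonal_comp_add_dim:
  fixes S :: "'a::euclidean_space set"
  shows "dim (S\<^sup>\<bottom>) + dim S = DIM('a)"
proof -
  have "dim ((span S)\<^sup>\<bottom>) + dim (span S) = DIM('a)"
    using dim_subspace_orthogonal_to_vectors[of "span S" UNIV]
    by (simp add: orthogonal_comp_def dim_UNIV)
  then show ?thesis by (simp add: orthogonal_comp_span dim_span)
qed

section \<open>Lattice points and primitive facet normals\<close>

lemma lattice_pt_inner_Ints:
  assumes "lattice_pt x" "lattice_pt y"
  shows "x \<bullet> y \<in> \<int>"
  using assms unfolding lattice_pt_def inner_vec_def by (intro Ints_sum) (simp add: Ints_mult)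

lemma Ints_less_imp_add_one_le:
  fixes x c :: real
  assumes "x \<in> \<int>" "c \<in> \<int>" "c < x"
  shows "c + 1 \<le> x"
proof -
  obtain a b where "x = of_int a" "c = of_int b" using assms(1,2) by (metis Ints_cases)
  then show ?thesis using assms(3) by simp
qed

lemma primitive_pt_lattice_pt: "primitive_pt v \<Longrightarrow> lattice_pt v"
  and primitive_pt_nonzero: "primitive_pt v \<Longrightarrow> v \<noteq> 0"
  by (simp_all add: primitive_pt_def)

lemma coprime_div_Ints:
  fixes m n :: nat and a b :: int
  assumes "coprime m n" "n \<noteq> 0" "real n * of_int b = real m * of_int a"
  shows "of_int a / real n \<in> \<int>"
proof -
  have "of_int (int n * b) = (of_int (int m * a) :: real)" using assms(3) by simp
  then have "int n * b = int m * a" by (simp only: of_int_eq_iff)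
  then have "int n dvd int m * a" by (metis dvd_triv_left)
  moreover have "coprime (int n) (int m)" using assms(1) by (simp add: coprime_commute)
  ultimately obtain k where "a = int n * k" using coprime_dvd_mult_right_iff by (blast elim: dvdE)
  then show ?thesis using assms(2) by simp
qed

text \<open>Write \<open>l = m / n\<close> in lowest terms: then \<open>e / n\<close> and \<open>e' / m\<close> are lattice points, so
  primitivity forces \<open>n = m = 1\<close>.\<close>

lemma primitive_pt_positive_multiple_eq:
  fixes e e' :: "real^'d"
  assumes "primitive_pt e" "primitive_pt e'" "e' = l *\<^sub>R e" "l > 0"
  shows "e' = e"
proof -
  have le: "lattice_pt e" and le': "lattice_pt e'" using assms primitive_pt_lattice_pt by auto
  obtain k where k: "e $ k \<noteq> 0" using primitive_pt_nonzero[OF assms(1)] by (metis vec_eq_iff zero_index)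
  have "l = e' $ k / e $ k" using assms(3) k by simp
  moreover have "e $ k \<in> \<int>" "e' $ k \<in> \<int>" using le le' unfolding lattice_pt_def by auto
  ultimately have "l \<in> \<rat>" by (metis Ints_subset_Rats Rats_divide subsetD)
  then obtain m n :: nat where mn: "n \<noteq> 0" "\<bar>l\<bar> = real m / real n" "coprime m n"
    by (rule Rats_abs_nat_div_natE)
  have lmn: "l = real m / real n" using mn(2) assms(4) by simp
  have "m \<noteq> 0" using lmn assms(4) by (cases "m = 0") auto
  have "lattice_pt ((1 / real_of_int (int n)) *\<^sub>R e)"
    unfolding lattice_pt_def
  proof
    fix j
    obtain a where a: "e $ j = of_int a" using le unfolding lattice_pt_def by (metis Ints_cases)
    obtain b where b: "e' $ j = of_int b" using le' unfolding lattice_pt_def by (metis Ints_cases)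
    have "real n * e' $ j = real m * e $ j" using assms(3) mn(1) by (simp add: lmn)
    then have "of_int a / real n \<in> \<int>" using coprime_div_Ints[OF mn(3,1)] a b by simp
    then show "((1 / real_of_int (int n)) *\<^sub>R e) $ j \<in> \<int>" using a by simp
  qed
  then have "\<not> int n > 1" using assms(1) unfolding primitive_pt_def by blast
  then have "n = 1" using mn(1) by simp
  then have "(1 / real_of_int (int m)) *\<^sub>R e' = e" using assms(3) lmn \<open>m \<noteq> 0\<close> by simp
  then have "lattice_pt ((1 / real_of_int (int m)) *\<^sub>R e')" using le by simp
  then have "\<not> int m > 1" using assms(2) unfolding primitive_pt_def by blast
  then have "m = 1" using \<open>m \<noteq> 0\<close> by simp
  with \<open>n = 1\<close> show ?thesis using assms(3) lmn by simp
qed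

lemma hyperplane_subset_imp_parallel:
  fixes e e' :: "'a::real_inner"
  assumes "e \<noteq> 0" "{x. e \<bullet> x = e \<bullet> f} \<subseteq> {x. e' \<bullet> x = e' \<bullet> f}"
  shows "e' = ((e' \<bullet> e) / (e \<bullet> e)) *\<^sub>R e"
proof -
  define v where "v = e' - ((e' \<bullet> e) / (e \<bullet> e)) *\<^sub>R e"
  have ev: "e \<bullet> v = 0" using assms(1) by (simp add: v_def inner_diff_right inner_commute)
  then have "f + v \<in> {x. e \<bullet> x = e \<bullet> f}" by (simp add: inner_add_right)
  then have "e' \<bullet> (f + v) = e' \<bullet> f" using assms(2) by blast
  then have "e' \<bullet> v = 0" by (simp add: inner_add_right)
  then have "v \<bullet> v = 0" using ev by (simp add: v_def inner_diff_left inner_commute)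
  then show ?thesis by (simp add: v_def)
qed

lemma affine_hull_facet_eq_hyperplane:
  fixes P F :: "'a::euclidean_space set"
  assumes "aff_dim P = DIM('a)" "F facet_of P" "e \<noteq> 0" "f \<in> F"
    and "\<forall>x\<in>F. \<forall>y\<in>P. x \<bullet> e \<le> y \<bullet> e"
  shows "affine hull F = {x. e \<bullet> x = e \<bullet> f}"
proof (rule affine_dim_equal)
  have "x \<bullet> e = f \<bullet> e" if "x \<in> F" for x
    using assms(4,5) that facet_of_imp_subset[OF assms(2)] by (meson order_antisym subsetD)
  then show "affine hull F \<subseteq> {x. e \<bullet> x = e \<bullet> f}"
    by (intro hull_minimal affine_hyperplane) (auto simp: inner_commute)
  show "aff_dim (affine hull F) = aff_dim {x. e \<bullet> x = e \<bullet> f}"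
    using assms(1-3) unfolding facet_of_def by simp
qed (use assms(4) affine_hyperplane in auto)

lemma facet_inward_normals_parallel:
  fixes P F :: "'a::euclidean_space set"
  assumes "aff_dim P = DIM('a)" "F facet_of P" "e \<noteq> 0" "e' \<noteq> 0"
    and e: "\<forall>x\<in>F. \<forall>y\<in>P. x \<bullet> e \<le> y \<bullet> e" and e': "\<forall>x\<in>F. \<forall>y\<in>P. x \<bullet> e' \<le> y \<bullet> e'"
  obtains l where "l > 0" "e' = l *\<^sub>R e"
proof -
  obtain f where f: "f \<in> F" using assms(2) unfolding facet_of_def by blast
  let ?k = "(e' \<bullet> e) / (e \<bullet> e)"
  have "{x. e \<bullet> x = e \<bullet> f} \<subseteq> {x. e' \<bullet> x = e' \<bullet> f}"
    using affine_hull_facet_eq_hyperplane[OF assms(1,2,3) f e]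
      affine_hull_facet_eq_hyperplane[OF assms(1,2,4) f e'] by simp
  then have e'k: "e' = ?k *\<^sub>R e" by (rule hyperplane_subset_imp_parallel[OF assms(3)])
  have "\<not> P \<subseteq> {x. e \<bullet> x = e \<bullet> f}"
    using aff_dim_subset[of P "{x. e \<bullet> x = e \<bullet> f}"] assms(1,3) by auto
  then obtain q where q: "q \<in> P" "e \<bullet> q \<noteq> e \<bullet> f" by auto
  have "f \<bullet> e \<le> q \<bullet> e" using e f q(1) by auto
  then have "f \<bullet> e < q \<bullet> e" using q(2) by (simp add: inner_commute)
  moreover have "?k * (f \<bullet> e) \<le> ?k * (q \<bullet> e)" using e' f q(1) e'k by (metis inner_scaleR_right inner_commute)
  moreover have "?k \<noteq> 0" using assms(4) e'k by auto
  ultimately have "?k > 0" by (metis linorder_neqE_linordered_idom mult_le_cancel_left not_le)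
  with e'k that show ?thesis by blast
qed

lemma finite_facet_normals:
  fixes P :: "(real^'d) set"
  assumes "polytope P" "aff_dim P = int CARD('d)"
  shows "finite (facet_normals P)"
proof -
  let ?E = "facet_normals P"
  define f where "f e = (SOME F. F facet_of P \<and> (\<forall>x\<in>F. \<forall>y\<in>P. x \<bullet> e \<le> y \<bullet> e))" for e
  have fe: "f e facet_of P \<and> (\<forall>x\<in>f e. \<forall>y\<in>P. x \<bullet> e \<le> y \<bullet> e)" if "e \<in> ?E" for e
  proof -
    from that obtain F where "F facet_of P \<and> (\<forall>x\<in>F. \<forall>y\<in>P. x \<bullet> e \<le> y \<bullet> e)"
      unfolding facet_normals_def by auto
    then show ?thesis unfolding f_def by (rule someI)
  qed
  have "inj_on f ?E"
  proof
    fix e e' assume e: "e \<in> ?E" and e': "e' \<in> ?E" and "f e = f e'"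
    have pe: "primitive_pt e" "primitive_pt e'" using e e' unfolding facet_normals_def by auto
    have "aff_dim P = DIM(real^'d)" using assms(2) by simp
    then obtain l where "l > 0" "e' = l *\<^sub>R e"
      using facet_inward_normals_parallel[of P "f e" e e'] fe[OF e] fe[OF e']
        \<open>f e = f e'\<close> pe primitive_pt_nonzero by metis
    with pe show "e = e'" using primitive_pt_positive_multiple_eq by metis
  qed
  moreover have "f ` ?E \<subseteq> {F. F facet_of P}" using fe by auto
  then have "finite (f ` ?E)" using finite_polytope_facets[OF assms(1)] finite_subset by blast
  ultimately show ?thesis using finite_imageD by blast
qed

lemma supp_phi_attained:
  fixes K :: "(real^'d) set"
  assumes "compact K" "K \<noteq> {}"
  obtains a where "a \<in> K" "a \<bullet> e = - supp_phi K e" "\<forall>x\<in>K. - supp_phi K e \<le> x \<bullet> e"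
proof -
  have "continuous_on K (\<lambda>x. x \<bullet> e)" by (intro continuous_intros)
  then obtain a where a: "a \<in> K" "\<forall>y\<in>K. a \<bullet> e \<le> y \<bullet> e"
    using continuous_attains_inf[OF assms] by blast
  then have "- supp_phi K e = a \<bullet> e" unfolding supp_phi_def by (simp, intro cInf_eq_minimum) auto
  with a that show ?thesis by auto
qed

section \<open>Nef-partitions\<close>

locale nef_partition_setting =
  fixes P :: "(real^'d) set" and Ds :: "nat \<Rightarrow> (real^'d) set" and r :: nat
  assumes reflexive: "reflexive_polytope P" and nef: "nef_partition P Ds r"
begin

lemma mem_P_iff: "x \<in> P \<longleftrightarrow> (\<forall>e\<in>facet_normals P. -1 \<le> x \<bullet> e)"
  using reflexive unfolding reflexive_polytope_def by blast

lemma P_eq_set_sum: "P = (\<Sum>j\<in>{1..r}. Ds j)"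
  using nef unfolding nef_partition_def by blast

lemma compact_P: "compact P" and P_nonempty: "P \<noteq> {}"
  and finite_facet_normals_P: "finite (facet_normals P)"
proof -
  obtain S where S: "finite S" "S \<noteq> {}" "P = convex hull S"
    using reflexive unfolding reflexive_polytope_def lattice_polytope_def by blast
  then show "compact P" "P \<noteq> {}" by (auto simp: compact_convex_hull finite_imp_compact)
  have "polytope P" using S unfolding polytope_def by blast
  then show "finite (facet_normals P)"
    using finite_facet_normals reflexive unfolding reflexive_polytope_def by blast
qed

lemma facet_normal_lattice_pt: "e \<in> facet_normals P \<Longrightarrow> lattice_pt e"
  and facet_normal_nonzero: "e \<in> facet_normals P \<Longrightarrow> e \<noteq> 0"
  unfolding facet_normals_def by (auto dest: primitive_pt_lattice_pt primitive_pt_nonzero)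

lemma
  assumes "j \<in> {1..r}"
  shows compact_summand: "compact (Ds j)" and convex_summand: "convex (Ds j)"
    and summand_nonempty: "Ds j \<noteq> {}"
proof -
  obtain S where "finite S" "S \<noteq> {}" "Ds j = convex hull S"
    using nef assms unfolding nef_partition_def lattice_polytope_def by blast
  then show "compact (Ds j)" "convex (Ds j)" "Ds j \<noteq> {}"
    by (auto simp: compact_convex_hull finite_imp_compact)
qed

lemma supp_phi_summand_cases:
  "j \<in> {1..r} \<Longrightarrow> e \<in> facet_normals P \<Longrightarrow> supp_phi (Ds j) e = 0 \<or> supp_phi (Ds j) e = 1"
  using nef unfolding nef_partition_def by auto

lemma supp_phi_summand_lower_bound:
  "j \<in> {1..r} \<Longrightarrow> x \<in> Ds j \<Longrightarrow> - supp_phi (Ds j) e \<le> x \<bullet> e"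
  by (metis compact_summand summand_nonempty supp_phi_attained)

lemma supp_phi_minimisers:
  obtains a where "\<forall>j\<in>{1..r}. a j \<in> Ds j \<and> a j \<bullet> e = - supp_phi (Ds j) e"
proof -
  have "\<forall>j\<in>{1..r}. \<exists>a. a \<in> Ds j \<and> a \<bullet> e = - supp_phi (Ds j) e"
    by (metis compact_summand summand_nonempty supp_phi_attained)
  then show ?thesis using that by (metis bchoice)
qed

lemma sum_supp_phi_summands_le_1:
  assumes e: "e \<in> facet_normals P"
  shows "(\<Sum>j\<in>{1..r}. supp_phi (Ds j) e) \<le> 1"
proof -
  obtain a where a: "\<forall>j\<in>{1..r}. a j \<in> Ds j \<and> a j \<bullet> e = - supp_phi (Ds j) e"
    by (rule supp_phi_minimisers)
  then have "(\<Sum>j\<in>{1..r}. a j) \<in> P" unfolding P_eq_set_sum by (auto simp: mem_set_sum_iff)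
  with e have "-1 \<le> (\<Sum>j\<in>{1..r}. a j) \<bullet> e" by (simp add: mem_P_iff)
  with a show ?thesis by (simp add: inner_sum_left sum_negf)
qed

lemma sum_supp_phi_summands_pos:
  assumes e: "e \<in> facet_normals P"
  shows "0 < (\<Sum>j\<in>{1..r}. supp_phi (Ds j) e)"
proof -
  obtain t where "t > 0" "\<forall>e'\<in>facet_normals P. -1 \<le> (0 + t *\<^sub>R (-e)) \<bullet> e'"
    using inequalities_feasible_step[OF finite_facet_normals_P, of "\<lambda>_. -1" 0 "-e"] by auto
  then have "- (t *\<^sub>R e) \<in> P" by (simp add: mem_P_iff)
  then obtain b where b: "\<forall>j\<in>{1..r}. b j \<in> Ds j" "- (t *\<^sub>R e) = (\<Sum>j\<in>{1..r}. b j)"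
    unfolding P_eq_set_sum by (auto simp: mem_set_sum_iff)
  have "- (\<Sum>j\<in>{1..r}. supp_phi (Ds j) e) \<le> (\<Sum>j\<in>{1..r}. b j \<bullet> e)"
    unfolding sum_negf[symmetric] using b(1) supp_phi_summand_lower_bound by (intro sum_mono) blast
  also have "\<dots> = (\<Sum>j\<in>{1..r}. b j) \<bullet> e" by (simp add: inner_sum_left)
  also have "\<dots> = - t * (e \<bullet> e)" unfolding b(2)[symmetric] by simp
  also have "\<dots> < 0" using \<open>t > 0\<close> facet_normal_nonzero[OF e] by simp
  finally show ?thesis by simp
qed

text \<open>Each \<open>\<phi>\<^sub>j(e)\<close> is \<open>0\<close> or \<open>1\<close>, and their sum is \<open>\<phi>\<^sub>P(e) = 1\<close>.\<close>

lemma card_summands_supp_phi_eq_1: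
  assumes e: "e \<in> facet_normals P"
  shows "card {j\<in>{1..r}. supp_phi (Ds j) e = 1} = 1"
proof -
  let ?Z = "{j\<in>{1..r}. supp_phi (Ds j) e = 1}"
  have "(\<Sum>j\<in>{1..r}. supp_phi (Ds j) e) = (\<Sum>j\<in>{1..r}. if j \<in> ?Z then 1 else 0)"
    using supp_phi_summand_cases[OF _ e] by (intro sum.cong) auto
  also have "\<dots> = real (card ?Z)" by (simp add: sum.If_cases Int_def)
  finally show ?thesis
    using sum_supp_phi_summands_le_1[OF e] sum_supp_phi_summands_pos[OF e] by linarith
qed

lemma facet_normal_vertex_of_some_nabla:
  assumes "e \<in> facet_normals P"
  obtains k where "k \<in> {1..r}" "supp_phi (Ds k) e = 1"
proof -
  obtain k where "{j\<in>{1..r}. supp_phi (Ds j) e = 1} = {k}"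
    using card_summands_supp_phi_eq_1[OF assms] by (rule card_1_singletonE)
  then show ?thesis using that by blast
qed

lemma supp_phi_summand_at_facet_normal:
  assumes "e \<in> facet_normals P" "k \<in> {1..r}" "supp_phi (Ds k) e = 1" "j \<in> {1..r}"
  shows "supp_phi (Ds j) e = (if j = k then 1 else 0)"
proof (cases "supp_phi (Ds j) e = 1")
  case True
  obtain k' where Z: "{j\<in>{1..r}. supp_phi (Ds j) e = 1} = {k'}"
    using card_summands_supp_phi_eq_1[OF assms(1)] by (rule card_1_singletonE)
  have "j \<in> {k'}" "k \<in> {k'}" using True assms unfolding Z[symmetric] by auto
  then have "j = k" by simp
  with True show ?thesis by simp
next
  case False
  then show ?thesis using assms supp_phi_summand_cases by auto
qed

lemma summand_eq_polyhedron:
  assumes j: "j \<in> {1..r}"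
  shows "Ds j = {x. \<forall>e\<in>facet_normals P. - supp_phi (Ds j) e \<le> x \<bullet> e}"
proof
  show "Ds j \<subseteq> {x. \<forall>e\<in>facet_normals P. - supp_phi (Ds j) e \<le> x \<bullet> e}"
    using supp_phi_summand_lower_bound[OF j] by blast
  show "{x. \<forall>e\<in>facet_normals P. - supp_phi (Ds j) e \<le> x \<bullet> e} \<subseteq> Ds j"
  proof
    fix x assume x: "x \<in> {x. \<forall>e\<in>facet_normals P. - supp_phi (Ds j) e \<le> x \<bullet> e}"
    have sum: "Ds j + (\<Sum>k\<in>{1..r} - {j}. Ds k) = P"
      using sum.remove[OF finite_atLeastAtMost j, of Ds] by (simp add: P_eq_set_sum)
    have "\<forall>e\<in>facet_normals P. \<exists>q\<in>Ds j. q \<bullet> e \<le> x \<bullet> e"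
      using supp_phi_attained[OF compact_summand[OF j] summand_nonempty[OF j]] x
      by (metis (mono_tags, lifting) mem_Collect_eq)
    moreover have "P = {x. \<forall>e\<in>facet_normals P. -1 \<le> x \<bullet> e}" using mem_P_iff by blast
    ultimately show "x \<in> Ds j"
      using mem_Minkowski_summand_of_polyhedron[where A = "Ds j"
          and B = "\<Sum>k\<in>{1..r} - {j}. Ds k" and c = "\<lambda>_. -1", unfolded sum,
          OF finite_facet_normals_P convex_summand[OF j] compact_imp_closed[OF compact_summand[OF j]]
          compact_P P_nonempty]
      by blast
  qed
qed

lemma zero_in_summand: "j \<in> {1..r} \<Longrightarrow> 0 \<in> Ds j"
  using summand_eq_polyhedron supp_phi_summand_cases by fastforce

lemma P_plus_P_eq: "P + P = {x. \<forall>e\<in>facet_normals P. -2 \<le> x \<bullet> e}"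
proof
  show "P + P \<subseteq> {x. \<forall>e\<in>facet_normals P. -2 \<le> x \<bullet> e}"
    by (force simp: mem_P_iff inner_add_left elim!: set_plus_elim)
  show "{x. \<forall>e\<in>facet_normals P. -2 \<le> x \<bullet> e} \<subseteq> P + P"
  proof
    fix y assume "y \<in> {x. \<forall>e\<in>facet_normals P. -2 \<le> x \<bullet> e}"
    then have "\<forall>e\<in>facet_normals P. -1 \<le> ((1/2) *\<^sub>R y) \<bullet> e" by auto
    then have half: "(1/2) *\<^sub>R y \<in> P" using mem_P_iff by blast
    have "(1/2) *\<^sub>R y + (1/2) *\<^sub>R y \<in> P + P" using half half by (rule set_plus_intro)
    then show "y \<in> P + P" by (simp add: scaleR_2[symmetric])
  qed
qed

lemma facet_normal_inner_neg:
  assumes "x \<noteq> 0"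
  obtains e where "e \<in> facet_normals P" "x \<bullet> e < 0"
proof (rule ccontr)
  assume "\<not> thesis"
  then have nonneg: "\<forall>e\<in>facet_normals P. 0 \<le> x \<bullet> e" using that by force
  obtain B where B: "\<forall>y\<in>P. norm y \<le> B" using compact_imp_bounded[OF compact_P] bounded_iff by blast
  define t where "t = (\<bar>B\<bar> + 1) / norm x"
  have "t \<ge> 0" by (simp add: t_def)
  with nonneg have "t *\<^sub>R x \<in> P" by (simp add: mem_P_iff) (smt (verit) mult_nonneg_nonneg)
  with B have "norm (t *\<^sub>R x) \<le> B" by blast
  moreover have "norm (t *\<^sub>R x) = \<bar>B\<bar> + 1" using assms by (simp add: t_def)
  ultimately show False by linarith
qed

lemma nabla_star_subset_halfspace:
  assumes e: "e \<in> facet_normals P"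
  shows "nabla_star Ds r \<subseteq> {x. -1 \<le> e \<bullet> x}"
  unfolding nabla_star_def
proof (rule hull_minimal)
  show "(\<Union>j\<in>{1..r}. Ds j) \<subseteq> {x. -1 \<le> e \<bullet> x}"
  proof
    fix x assume "x \<in> (\<Union>j\<in>{1..r}. Ds j)"
    then obtain j where j: "j \<in> {1..r}" "x \<in> Ds j" by blast
    then have "- supp_phi (Ds j) e \<le> x \<bullet> e" by (rule supp_phi_summand_lower_bound)
    with supp_phi_summand_cases[OF j(1) e] show "x \<in> {x. -1 \<le> e \<bullet> x}"
      by (auto simp: inner_commute)
  qed
qed (use convex_halfspace_ge[of "-1" e] in auto)

lemma compact_nabla_star: "compact (nabla_star Ds r)"
  unfolding nabla_star_def using compact_summand by (intro compact_convex_hull compact_UN) auto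

lemma partial_sum_inner_lower_bound:
  assumes J: "J \<subseteq> {1..r}" and i: "i \<in> J" and x: "x \<in> Ds i + (\<Sum>j\<in>J. Ds j)"
  shows "- (supp_phi (Ds i) e + (\<Sum>j\<in>J. supp_phi (Ds j) e)) \<le> x \<bullet> e"
proof -
  obtain a c where ac: "a \<in> Ds i" "\<forall>j\<in>J. c j \<in> Ds j" "x = a + sum c J"
    using x J by (auto simp: mem_set_sum_iff finite_subset elim!: set_plus_elim)
  have "(\<Sum>j\<in>J. - supp_phi (Ds j) e) \<le> (\<Sum>j\<in>J. c j \<bullet> e)"
    using ac(2) J supp_phi_summand_lower_bound by (intro sum_mono) blast
  moreover have "- supp_phi (Ds i) e \<le> a \<bullet> e"
    using J i ac(1) supp_phi_summand_lower_bound by blast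
  ultimately show ?thesis by (simp add: ac(3) inner_add_left inner_sum_left sum_negf)
qed

lemma partial_sum_summand_of_P_plus_P:
  assumes J: "J \<subseteq> {1..r}" and i: "i \<in> J"
  shows "(Ds i + (\<Sum>j\<in>J. Ds j))
    + ((\<Sum>j\<in>J - {i}. Ds j) + (\<Sum>j\<in>{1..r} - J. Ds j) + (\<Sum>j\<in>{1..r} - J. Ds j)) = P + P"
proof -
  have fJ: "finite J" using J finite_subset by blast
  have "P = (\<Sum>j\<in>{1..r} - J. Ds j) + (Ds i + (\<Sum>j\<in>J - {i}. Ds j))"
    using sum.subset_diff[OF J finite_atLeastAtMost, of Ds] sum.remove[OF fJ i, of Ds]
    by (simp add: P_eq_set_sum)
  moreover have "Ds i + (\<Sum>j\<in>J. Ds j) = Ds i + (Ds i + (\<Sum>j\<in>J - {i}. Ds j))"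
    using sum.remove[OF fJ i, of Ds] by simp
  ultimately show ?thesis by (simp add: ac_simps)
qed

lemma partial_sum_eq_polyhedron:
  assumes J: "J \<subseteq> {1..r}" and i: "i \<in> J"
  shows "Ds i + (\<Sum>j\<in>J. Ds j) = {x. \<forall>e\<in>facet_normals P.
           - (supp_phi (Ds i) e + (\<Sum>j\<in>J. supp_phi (Ds j) e)) \<le> x \<bullet> e}"
    (is "?Q = ?H")
proof
  show "?Q \<subseteq> ?H" using partial_sum_inner_lower_bound[OF J i] by blast
  show "?H \<subseteq> ?Q"
  proof
    fix x assume x: "x \<in> ?H"
    have fJ: "finite J" and iI: "i \<in> {1..r}" using J i finite_subset by auto
    have "compact ?Q" "convex ?Q"
      using J iI compact_summand convex_summand
      by (auto intro!: compact_set_plus compact_set_sum convex_set_plus convex_set_sum)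
    moreover have "compact (P + P)" "P + P \<noteq> {}"
      using compact_P P_nonempty by (auto intro: compact_set_plus)
    moreover have "\<exists>q\<in>?Q. q \<bullet> e \<le> x \<bullet> e" if e: "e \<in> facet_normals P" for e
    proof -
      obtain a where a: "\<forall>j\<in>{1..r}. a j \<in> Ds j \<and> a j \<bullet> e = - supp_phi (Ds j) e"
        by (rule supp_phi_minimisers)
      then have "a i + sum a J \<in> ?Q"
        using J iI by (intro set_plus_intro) (auto simp: mem_set_sum_iff[OF fJ])
      moreover have "(\<Sum>j\<in>J. a j \<bullet> e) = (\<Sum>j\<in>J. - supp_phi (Ds j) e)"
        using a J by (intro sum.cong) auto
      then have "(a i + sum a J) \<bullet> e = - (supp_phi (Ds i) e + (\<Sum>j\<in>J. supp_phi (Ds j) e))"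
        using a iI by (simp add: inner_add_left inner_sum_left sum_negf)
      ultimately show ?thesis using x e by (metis (mono_tags, lifting) mem_Collect_eq order_refl)
    qed
    ultimately show "x \<in> ?Q"
      using mem_Minkowski_summand_of_polyhedron[OF finite_facet_normals_P _ _ _ _
          partial_sum_summand_of_P_plus_P[OF J i, unfolded P_plus_P_eq]]
        partial_sum_summand_of_P_plus_P[OF J i]
      by (simp add: compact_imp_closed)
  qed
qed

end


section \<open>The faces \<open>\<nabla>\<^sub>j(w)\<close> and the relative interior of \<open>\<Delta>\<^sub>i + \<Sum>\<^sub>j\<^sub>\<in>\<^sub>J \<Delta>\<^sub>j\<close>\<close>

locale nef_face_setting = nef_partition_setting P Ds r
  for P :: "(real^'d) set" and Ds :: "nat \<Rightarrow> (real^'d) set" and r :: nat +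
  fixes J :: "nat set" and i :: nat and w :: "real^'d"
  assumes J_subset: "J \<subseteq> {1..r}" and i_in_J: "i \<in> J"
    and lattice_w: "lattice_pt w" and w_nonzero: "w \<noteq> 0"
begin

abbreviation Q :: "(real^'d) set" where
  "Q \<equiv> Ds i + (\<Sum>j\<in>J. Ds j)"

abbreviation face_sum :: "(real^'d) set" where
  "face_sum \<equiv> \<Sum>j\<in>{1..r} - J. nabla_face P Ds j w"

definition phi_Q :: "real^'d \<Rightarrow> real" where
  "phi_Q e = supp_phi (Ds i) e + (\<Sum>j\<in>J. supp_phi (Ds j) e)"

text \<open>For \<open>w \<in> \<Delta>\<^sub>i\<close> these are the normals of the facets of \<open>Q\<close> through \<open>w\<close>.\<close>

definition tight_normals :: "(real^'d) set" where
  "tight_normals = {e\<in>facet_normals P. (\<exists>k\<in>{1..r} - J. supp_phi (Ds k) e = 1) \<and> w \<bullet> e = 0}"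

lemma finite_J: "finite J" and i_in_range: "i \<in> {1..r}"
  using J_subset i_in_J finite_subset by auto

lemma mem_Q_iff: "x \<in> Q \<longleftrightarrow> (\<forall>e\<in>facet_normals P. - phi_Q e \<le> x \<bullet> e)"
  using partial_sum_eq_polyhedron[OF J_subset i_in_J] unfolding phi_Q_def by blast

lemma mem_summand_i_iff: "x \<in> Ds i \<longleftrightarrow> (\<forall>e\<in>facet_normals P. - supp_phi (Ds i) e \<le> x \<bullet> e)"
  using summand_eq_polyhedron[OF i_in_range] by blast

lemma zero_in_Q: "0 \<in> Q" and summand_i_subset_Q: "Ds i \<subseteq> Q"
proof -
  have J0: "0 \<in> (\<Sum>j\<in>J. Ds j)" using J_subset zero_in_summand by (intro zero_in_set_sum) auto
  have "0 + 0 \<in> Q" using zero_in_summand[OF i_in_range] J0 by (intro set_plus_intro)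
  then show "0 \<in> Q" by simp
  have "Ds i \<subseteq> (\<Sum>j\<in>J. Ds j) + Ds i" using J0 by (rule set_zero_plus2)
  then show "Ds i \<subseteq> Q" by (simp add: add.commute)
qed

lemma phi_Q_at_facet_normal:
  assumes "e \<in> facet_normals P" "k \<in> {1..r}" "supp_phi (Ds k) e = 1"
  shows "phi_Q e = supp_phi (Ds i) e + (if k \<in> J then 1 else 0)"
    and "supp_phi (Ds i) e = (if k = i then 1 else 0)"
proof -
  have "(\<Sum>j\<in>J. supp_phi (Ds j) e) = (\<Sum>j\<in>J. if j = k then 1 else 0)"
    using supp_phi_summand_at_facet_normal[OF assms] J_subset by (intro sum.cong) auto
  then show "phi_Q e = supp_phi (Ds i) e + (if k \<in> J then 1 else 0)"
    unfolding phi_Q_def using finite_J by (simp add: sum.delta')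
  show "supp_phi (Ds i) e = (if k = i then 1 else 0)"
    using supp_phi_summand_at_facet_normal[OF assms i_in_range] by simp
qed

lemma phi_Q_Ints:
  assumes "e \<in> facet_normals P"
  shows "phi_Q e \<in> \<int>"
proof -
  obtain k where "k \<in> {1..r}" "supp_phi (Ds k) e = 1"
    using facet_normal_vertex_of_some_nabla[OF assms] .
  then show ?thesis using phi_Q_at_facet_normal[OF assms] by simp
qed

lemma inner_w_Ints: "e \<in> facet_normals P \<Longrightarrow> w \<bullet> e \<in> \<int>"
  using lattice_pt_inner_Ints[OF lattice_w facet_normal_lattice_pt] .

lemma phi_Q_tight_normal: "e \<in> tight_normals \<Longrightarrow> phi_Q e = 0"
  unfolding tight_normals_def using phi_Q_at_facet_normal i_in_J by fastforce

lemma finite_tight_normals: "finite tight_normals"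
  using finite_facet_normals_P unfolding tight_normals_def by simp

lemma active_normal_imp_tight:
  assumes "w \<in> Ds i" "e \<in> facet_normals P" "w \<bullet> e = - phi_Q e"
  shows "e \<in> tight_normals"
proof -
  obtain k where k: "k \<in> {1..r}" "supp_phi (Ds k) e = 1"
    using facet_normal_vertex_of_some_nabla[OF assms(2)] .
  have "- supp_phi (Ds i) e \<le> w \<bullet> e" using assms(1,2) mem_summand_i_iff by blast
  then have "k \<notin> J" using phi_Q_at_facet_normal[OF assms(2) k] assms(3) by auto
  then show ?thesis
    using phi_Q_at_facet_normal[OF assms(2) k] assms(2,3) k i_in_J
    unfolding tight_normals_def by auto
qed

lemma inner_w_nonneg_at_vertex_of_nabla:
  assumes "w \<in> Ds i" "k \<in> {1..r} - J" "e \<in> facet_normals P" "supp_phi (Ds k) e = 1"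
  shows "0 \<le> w \<bullet> e"
proof -
  have "supp_phi (Ds i) e = 0"
    using phi_Q_at_facet_normal(2)[OF assms(3) _ assms(4)] assms(2) i_in_J by auto
  then show ?thesis using assms(1,3) mem_summand_i_iff by force
qed

text \<open>A normal of a facet of \<open>Q\<close> not through \<open>0\<close> is not active at the relative interior point
  \<open>w\<close>, so by integrality \<open>w\<close> lies at lattice distance at least one from that facet.\<close>

lemma rel_interior_Q_imp_mem_summand_i:
  assumes rel: "w \<in> rel_interior Q"
  shows "w \<in> Ds i"
  unfolding mem_summand_i_iff
proof
  fix e assume e: "e \<in> facet_normals P"
  obtain k where k: "k \<in> {1..r}" "supp_phi (Ds k) e = 1"
    using facet_normal_vertex_of_some_nabla[OF e] .
  have lower: "\<forall>q\<in>Q. - phi_Q e \<le> q \<bullet> e" using mem_Q_iff e by blast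
  show "- supp_phi (Ds i) e \<le> w \<bullet> e"
  proof (cases "k \<in> J")
    case True
    then have "- phi_Q e < 0 \<bullet> e"
      using phi_Q_at_facet_normal[OF e k] supp_phi_summand_cases[OF i_in_range e] by auto
    then have "- phi_Q e < w \<bullet> e" using rel_interior_inner_gt[OF rel zero_in_Q lower] by blast
    then have "- phi_Q e + 1 \<le> w \<bullet> e"
      by (intro Ints_less_imp_add_one_le inner_w_Ints[OF e]) (simp_all add: phi_Q_Ints[OF e])
    with True show ?thesis using phi_Q_at_facet_normal(1)[OF e k] by simp
  next
    case False
    then show ?thesis
      using phi_Q_at_facet_normal(1)[OF e k] lower rel_interior_subset rel by auto
  qed
qed

text \<open>\<open>w\<close> pairs to \<open>-1\<close> with some facet normal, whose half-space contains \<open>\<nabla>\<^sup>*\<close>.\<close>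

lemma mem_summand_i_imp_frontier_nabla_star:
  assumes wi: "w \<in> Ds i"
  shows "w \<in> frontier (nabla_star Ds r)"
proof -
  obtain e where e: "e \<in> facet_normals P" "w \<bullet> e < 0"
    using facet_normal_inner_neg[OF w_nonzero] .
  have "w \<bullet> e = -1"
    using Ints_less_imp_add_one_le[OF _ inner_w_Ints[OF e(1)] e(2)] wi e(1)
      supp_phi_summand_cases[OF i_in_range e(1)] mem_summand_i_iff by force
  moreover have "interior (nabla_star Ds r) \<subseteq> {x. -1 < e \<bullet> x}"
    using interior_mono[OF nabla_star_subset_halfspace[OF e(1)]]
      interior_halfspace_ge[OF facet_normal_nonzero[OF e(1)], of "-1"] by simp
  ultimately have "w \<notin> interior (nabla_star Ds r)" by (auto simp: inner_commute)
  moreover have "w \<in> nabla_star Ds r"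
    unfolding nabla_star_def using wi i_in_range by (intro hull_inc) blast
  ultimately show ?thesis by (simp add: frontier_def compact_imp_closed compact_nabla_star)
qed

lemma inner_tight_normal_nonneg_on_Q:
  assumes e: "e \<in> tight_normals" and q: "q \<in> Q"
  shows "0 \<le> q \<bullet> e"
proof -
  have "e \<in> facet_normals P" using e unfolding tight_normals_def by blast
  then have "- phi_Q e \<le> q \<bullet> e" using q mem_Q_iff by blast
  then show ?thesis using phi_Q_tight_normal[OF e] by simp
qed

lemma rel_interior_Q_orthogonal_tight_normals:
  assumes rel: "w \<in> rel_interior Q" and e: "e \<in> tight_normals" and q: "q \<in> Q"
  shows "q \<bullet> e = 0"
proof -
  have "\<forall>q\<in>Q. 0 \<le> q \<bullet> e" using inner_tight_normal_nonneg_on_Q[OF e] by blast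
  moreover have "w \<bullet> e = 0" using e unfolding tight_normals_def by blast
  ultimately have "\<not> 0 < q \<bullet> e" using rel_interior_inner_gt[OF rel q] by force
  with inner_tight_normal_nonneg_on_Q[OF e q] show ?thesis by linarith
qed

lemma subspace_cone_orthogonal_tight_normals:
  assumes sub: "subspace (convex_cone hull tight_normals)" and e: "e \<in> tight_normals" and q: "q \<in> Q"
  shows "q \<bullet> e = 0"
proof -
  have "-e \<in> convex_cone hull tight_normals" using sub e by (simp add: hull_inc subspace_neg)
  then have "0 \<le> q \<bullet> (-e)"
    using inner_tight_normal_nonneg_on_Q[OF _ q] by (blast intro: inner_nonneg_on_convex_cone_hull)
  with inner_tight_normal_nonneg_on_Q[OF e q] show ?thesis by simp
qed

text \<open>Moving \<open>w\<close> in a direction that keeps the tight inequalities stays inside \<open>Q\<close>; if some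
  \<open>-e\<close> were outside the cone of tight normals, Farkas' lemma would give such a direction
  leaving the hyperplane \<open>e\<^sup>\<bottom>\<close>, which contains \<open>Q\<close>.\<close>

lemma rel_interior_Q_imp_subspace_cone:
  assumes rel: "w \<in> rel_interior Q"
  shows "subspace (convex_cone hull tight_normals)"
  unfolding subspace_convex_cone_hull_iff
proof (rule ballI, rule ccontr)
  fix e assume e: "e \<in> tight_normals" and "-e \<notin> convex_cone hull tight_normals"
  then obtain a where a: "a \<bullet> (-e) < 0" "\<forall>s\<in>tight_normals. 0 \<le> a \<bullet> s"
    using Farkas_separation[OF finite_tight_normals] by blast
  have wi: "w \<in> Ds i" using rel_interior_Q_imp_mem_summand_i[OF rel] .
  have "\<forall>e\<in>facet_normals P. - phi_Q e \<le> w \<bullet> e" using summand_i_subset_Q wi mem_Q_iff by blast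
  moreover have "\<forall>e\<in>facet_normals P. w \<bullet> e = - phi_Q e \<longrightarrow> 0 \<le> a \<bullet> e"
    using active_normal_imp_tight[OF wi] a(2) by blast
  ultimately obtain t where t: "t > 0" "\<forall>e\<in>facet_normals P. - phi_Q e \<le> (w + t *\<^sub>R a) \<bullet> e"
    using inequalities_feasible_step[OF finite_facet_normals_P, of "\<lambda>e. - phi_Q e" w a] by blast
  then have "(w + t *\<^sub>R a) \<bullet> e = 0"
    using rel_interior_Q_orthogonal_tight_normals[OF rel e] mem_Q_iff by blast
  moreover have "w \<bullet> e = 0" using e unfolding tight_normals_def by auto
  ultimately show False using t(1) a(1) by (simp add: inner_add_left)
qed

lemma subspace_cone_imp_rel_interior_Q:
  assumes wi: "w \<in> Ds i" and sub: "subspace (convex_cone hull tight_normals)"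
  shows "w \<in> rel_interior Q"
  unfolding mem_rel_interior
proof (intro exI conjI)
  let ?T = "\<Inter>e\<in>facet_normals P - tight_normals. {y. - phi_Q e < y \<bullet> e}"
  show "open ?T"
    using finite_facet_normals_P open_halfspace_gt by (auto simp: inner_commute intro!: open_INT)
  have "w \<in> Q" using wi summand_i_subset_Q by blast
  moreover have "w \<in> ?T"
  proof
    fix e assume e: "e \<in> facet_normals P - tight_normals"
    then have "- phi_Q e \<le> w \<bullet> e" "w \<bullet> e \<noteq> - phi_Q e"
      using \<open>w \<in> Q\<close> mem_Q_iff active_normal_imp_tight[OF wi] by blast+
    then show "w \<in> {y. - phi_Q e < y \<bullet> e}" by simp
  qed
  ultimately show "w \<in> ?T \<inter> Q" by blast
  show "?T \<inter> affine hull Q \<subseteq> Q"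
  proof
    fix y assume y: "y \<in> ?T \<inter> affine hull Q"
    have "Q \<subseteq> tight_normals\<^sup>\<bottom>"
      using subspace_cone_orthogonal_tight_normals[OF sub] by (simp add: subset_orthogonal_comp_iff)
    then have "affine hull Q \<subseteq> tight_normals\<^sup>\<bottom>"
      by (intro hull_minimal subspace_imp_affine subspace_orthogonal_comp)
    with y have orth: "\<forall>e\<in>tight_normals. e \<bullet> y = 0"
      unfolding orthogonal_comp_def orthogonal_def by blast
    have "- phi_Q e \<le> y \<bullet> e" if "e \<in> facet_normals P" for e
    proof (cases "e \<in> tight_normals")
      case True
      with orth phi_Q_tight_normal show ?thesis by (simp add: inner_commute)
    next
      case False
      with that y show ?thesis by (auto intro: less_imp_le)
    qed
    then show "y \<in> Q" unfolding mem_Q_iff by blast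
  qed
qed

lemma nabla_subset_halfspace:
  assumes wi: "w \<in> Ds i" and j: "j \<in> {1..r} - J"
  shows "nabla P Ds j \<subseteq> {y. 0 \<le> w \<bullet> y}"
  unfolding nabla_def
  using inner_w_nonneg_at_vertex_of_nabla[OF wi j] convex_halfspace_ge[of 0 w]
  by (intro hull_minimal) (auto simp: inner_commute)

lemma nabla_face_eq:
  assumes wi: "w \<in> Ds i" and j: "j \<in> {1..r} - J"
  shows "nabla_face P Ds j w = nabla P Ds j \<inter> {y. w \<bullet> y = 0}"
proof -
  have "0 \<in> nabla P Ds j" unfolding nabla_def by (intro hull_inc) simp
  then show ?thesis
    using nabla_subset_halfspace[OF wi j] unfolding nabla_face_def by force
qed

text \<open>\<open>\<nabla>\<^sub>j(w)\<close> is spanned by \<open>0\<close> and those vertices of \<open>\<nabla>\<^sub>j\<close> on which \<open>w\<close> vanishes, and these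
  vertices are tight normals.\<close>

lemma nabla_face_subset_cone:
  assumes wi: "w \<in> Ds i" and j: "j \<in> {1..r} - J"
  shows "nabla_face P Ds j w \<subseteq> convex_cone hull tight_normals"
proof
  fix y assume "y \<in> nabla_face P Ds j w"
  let ?G = "{0} \<union> {e\<in>facet_normals P. supp_phi (Ds j) e = 1}"
  have "y \<in> convex hull ?G" "w \<bullet> y = 0"
    using \<open>y \<in> nabla_face P Ds j w\<close> unfolding nabla_face_eq[OF wi j] nabla_def by auto
  moreover have "\<forall>g\<in>?G. 0 \<le> w \<bullet> g" using inner_w_nonneg_at_vertex_of_nabla[OF wi j] by auto
  ultimately have y: "y \<in> convex_cone hull {g\<in>?G. w \<bullet> g = 0}"
    using finite_facet_normals_P by (intro convex_hull_inner_zero_in_cone) auto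
  have "{g\<in>?G. w \<bullet> g = 0} \<subseteq> insert 0 tight_normals"
    using j by (auto simp: tight_normals_def inner_commute)
  then have "{g\<in>?G. w \<bullet> g = 0} \<subseteq> convex_cone hull tight_normals"
    using convex_cone_hull_contains_0 hull_subset[of tight_normals convex_cone] by blast
  then have "convex_cone hull {g\<in>?G. w \<bullet> g = 0} \<subseteq> convex_cone hull tight_normals"
    by (intro hull_minimal convex_cone_convex_cone_hull)
  with y show "y \<in> convex_cone hull tight_normals" by blast
qed

lemma face_sum_between_tight_normals_and_cone:
  assumes wi: "w \<in> Ds i"
  shows "convex face_sum" "0 \<in> face_sum" "tight_normals \<subseteq> face_sum"
    and "face_sum \<subseteq> convex_cone hull tight_normals"
proof -
  have zero: "0 \<in> nabla_face P Ds j w" if "j \<in> {1..r} - J" for j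
    unfolding nabla_face_eq[OF wi that] nabla_def by (auto intro: hull_inc)
  show "convex face_sum"
  proof (rule convex_set_sum)
    fix j assume "j \<in> {1..r} - J"
    then show "convex (nabla_face P Ds j w)"
      unfolding nabla_face_eq[OF wi \<open>j \<in> {1..r} - J\<close>] nabla_def
      by (intro convex_Int convex_convex_hull) (simp add: convex_hyperplane)
  qed
  show "0 \<in> face_sum" using zero by (rule zero_in_set_sum)
  show "tight_normals \<subseteq> face_sum"
  proof
    fix e assume e: "e \<in> tight_normals"
    then obtain k where k: "k \<in> {1..r} - J" "supp_phi (Ds k) e = 1"
      unfolding tight_normals_def by blast
    then have "e \<in> nabla_face P Ds k w"
      using e unfolding nabla_face_eq[OF wi k(1)] nabla_def tight_normals_def
      by (auto simp: inner_commute intro: hull_inc)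
    moreover have "nabla_face P Ds k w \<subseteq> face_sum"
      using zero k(1) by (intro summand_subset_set_sum) auto
    ultimately show "e \<in> face_sum" by blast
  qed
  show "face_sum \<subseteq> convex_cone hull tight_normals"
  proof
    fix x assume "x \<in> face_sum"
    then obtain a where a: "\<forall>j\<in>{1..r} - J. a j \<in> nabla_face P Ds j w" "x = sum a ({1..r} - J)"
      by (auto simp: mem_set_sum_iff)
    have "sum a ({1..r} - J) \<in> convex_cone hull tight_normals"
      using a(1) nabla_face_subset_cone[OF wi]
      by (intro convex_cone_sum[OF convex_cone_convex_cone_hull]) blast
    with a(2) show "x \<in> convex_cone hull tight_normals" by simp
  qed
qed

lemma zero_in_rel_interior_face_sum_iff:
  "w \<in> Ds i \<Longrightarrow> 0 \<in> rel_interior face_sum \<longleftrightarrow> subspace (convex_cone hull tight_normals)"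
  using zero_in_rel_interior_iff_subspace_cone face_sum_between_tight_normals_and_cone by blast

lemma span_Q_eq:
  assumes rel: "w \<in> rel_interior Q"
  shows "span Q = tight_normals\<^sup>\<bottom>"
proof
  show "span Q \<subseteq> tight_normals\<^sup>\<bottom>"
    using rel_interior_Q_orthogonal_tight_normals[OF rel]
    by (intro span_minimal subspace_orthogonal_comp) (simp add: subset_orthogonal_comp_iff)
  show "tight_normals\<^sup>\<bottom> \<subseteq> span Q"
  proof
    fix x assume x: "x \<in> tight_normals\<^sup>\<bottom>"
    have wi: "w \<in> Ds i" using rel_interior_Q_imp_mem_summand_i[OF rel] .
    have "\<forall>e\<in>facet_normals P. - phi_Q e \<le> w \<bullet> e" using summand_i_subset_Q wi mem_Q_iff by blast
    moreover have "\<forall>e\<in>facet_normals P. w \<bullet> e = - phi_Q e \<longrightarrow> 0 \<le> x \<bullet> e"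
      using active_normal_imp_tight[OF wi] x by (auto simp: orthogonal_comp_def orthogonal_def inner_commute)
    ultimately obtain t where t: "t > 0" "\<forall>e\<in>facet_normals P. - phi_Q e \<le> (w + t *\<^sub>R x) \<bullet> e"
      using inequalities_feasible_step[OF finite_facet_normals_P, of "\<lambda>e. - phi_Q e" w x] by blast
    then have "w + t *\<^sub>R x \<in> Q" "w \<in> Q" using mem_Q_iff summand_i_subset_Q wi by blast+
    then have "(1/t) *\<^sub>R ((w + t *\<^sub>R x) - w) \<in> span Q"
      by (intro span_mul span_diff span_base)
    then show "x \<in> span Q" using t(1) by simp
  qed
qed

lemma span_face_sum_eq:
  assumes wi: "w \<in> Ds i"
  shows "span face_sum = span tight_normals"
proof
  show "span tight_normals \<subseteq> span face_sum"
    using face_sum_between_tight_normals_and_cone[OF wi] by (intro span_mono) blast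
  have "convex_cone hull tight_normals \<subseteq> span tight_normals"
    by (intro hull_minimal convex_cone_span span_superset)
  then show "span face_sum \<subseteq> span tight_normals"
    using face_sum_between_tight_normals_and_cone(4)[OF wi]
    by (intro span_minimal subspace_span) auto
qed

lemma aff_dim_Q_add_aff_dim_face_sum:
  assumes rel: "w \<in> rel_interior Q"
  shows "aff_dim Q + aff_dim face_sum = int CARD('d)"
proof -
  have wi: "w \<in> Ds i" using rel_interior_Q_imp_mem_summand_i[OF rel] .
  have "aff_dim Q = int (dim Q)" using zero_in_Q by (intro aff_dim_zero) (simp add: hull_inc)
  also have "dim Q = dim (tight_normals\<^sup>\<bottom>)" using span_Q_eq[OF rel] by (metis dim_span)
  moreover have "aff_dim face_sum = int (dim face_sum)"
    using face_sum_between_tight_normals_and_cone(2)[OF wi] by (intro aff_dim_zero) (simp add: hull_inc)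
  moreover have "dim face_sum = dim tight_normals" using span_face_sum_eq[OF wi] by (metis dim_span)
  ultimately show ?thesis using dim_orthogonal_comp_add_dim[of tight_normals] by simp
qed

theorem rel_interior_Q_iff:
  "w \<in> rel_interior Q \<longleftrightarrow> w \<in> Delta0 Ds r i \<and> 0 \<in> rel_interior face_sum"
proof
  assume rel: "w \<in> rel_interior Q"
  then have wi: "w \<in> Ds i" by (rule rel_interior_Q_imp_mem_summand_i)
  then show "w \<in> Delta0 Ds r i \<and> 0 \<in> rel_interior face_sum"
    unfolding Delta0_def zero_in_rel_interior_face_sum_iff[OF wi]
    using mem_summand_i_imp_frontier_nabla_star lattice_w rel_interior_Q_imp_subspace_cone[OF rel]
    by blast
next
  assume "w \<in> Delta0 Ds r i \<and> 0 \<in> rel_interior face_sum"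
  then have "w \<in> Ds i" "0 \<in> rel_interior face_sum" unfolding Delta0_def by auto
  then show "w \<in> rel_interior Q"
    using subspace_cone_imp_rel_interior_Q zero_in_rel_interior_face_sum_iff by blast
qed

end

theorem mainTheorem15:
  fixes P :: "(real^'d) set" and Ds :: "nat \<Rightarrow> (real^'d) set"
    and r i :: nat and J :: "nat set" and w :: "real^'d"
  assumes "reflexive_polytope P"
    and "nef_partition P Ds r"
    and "J \<subseteq> {1..r}" and "i \<in> J"
    and "lattice_pt w" and "w \<noteq> 0"
  shows "(w \<in> rel_interior (Ds i + (\<Sum>j\<in>J. Ds j)) \<longleftrightarrow>
           w \<in> Delta0 Ds r i \<and>
           0 \<in> rel_interior (\<Sum>j\<in>{1..r} - J. nabla_face P Ds j w))
       \<and> (w \<in> rel_interior (Ds i + (\<Sum>j\<in>J. Ds j)) \<longrightarrow>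
           aff_dim (Ds i + (\<Sum>j\<in>J. Ds j))
             + aff_dim (\<Sum>j\<in>{1..r} - J. nabla_face P Ds j w) = int CARD('d))"
proof -
  interpret nef_face_setting P Ds r J i w
    using assms by unfold_locales
  show ?thesis using rel_interior_Q_iff aff_dim_Q_add_aff_dim_face_sum by blast
qed

end
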